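(* Let $n,r$ be positive integers, let $C\in\mathbb{R}^{n\times n}$ be symmetric, and let $\rho\ge\max\{10\|C\|_{\infty},\,2\|C\|\}$. Let $(\tilde\sigma^k,\sigma^k,y^k)_{k\ge 0}$ be generated by the ADMM-BM algorithm described in the context, and suppose Assumption A holds (i.e. $\gamma_i^k\neq 0$ for every $i\in[n]$ and every iteration $k$). Then the sequence $L_\rho(\tilde\sigma^k,\sigma^k,y^k)$, $k\ge 1$, converges, and $L_\rho(\tilde\sigma^k,\sigma^k,y^k)-\langle C\tilde\sigma^k,\tilde\sigma^k\rangle\to 0$ as $k\to\infty$. Moreover, the sequence $(\tilde\sigma^k)$ has at least one convergent subsequence, and the limit of every convergent subsequence of $(\tilde\sigma^k)$ belongs to the set $\Omega$ of first-order stationary points of the problem $\min\{\langle C,\sigma\sigma^\top\rangle:\sigma\in\mathcal{M}\}$.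
   Context: For $A,B$ of equal size, $\langle A,B\rangle=\mathrm{Tr}(A^\top B)$ and $\|A\|_F=\sqrt{\langle A,A\rangle}$. $\|C\|$ is the spectral (operator 2-) norm and $\|C\|_\infty=\max_i\sum_j|C_{ij}|$. For $\sigma\in\mathbb{R}^{n\times r}$, $\sigma_i\in\mathbb{R}^r$ denotes the (transpose of the) $i$-th row, and $(C\sigma)_{i,\cdot}$ the $i$-th row of $C\sigma$. Let $\mathcal{M}=\{\sigma\in\mathbb{R}^{n\times r}:\|\sigma_i\|=1\ \forall i\in[n]\}$. ADMM-BM algorithm with parameter $\rho>0$: choose $\tilde\sigma^0\in\mathcal{M}$, set $\sigma^0=\tilde\sigma^0$, $y^0=C\tilde\sigma^0$. For $k=0,1,2,\dots$: set $\gamma^k=\sigma^k-\frac1\rho(y^k+C\sigma^k)$ with rows $\gamma^k_i$; set $\tilde\sigma^{k+1}_i=\gamma_i^k/\|\gamma_i^k\|$ for each $i\in[n]$; set $\sigma^{k+1}=\tilde\sigma^{k+1}+\frac1\rho(y^k-C\tilde\sigma^{k+1})$; set $y^{k+1}=y^k+\rho(\tilde\sigma^{k+1}-\sigma^{k+1})$. Assumption A: $\|\gamma_i^k\|\neq0$ for all $i\in[n]$ and all $k$. Augmented Lagrangian: $L_\rho(\tilde\sigma,\sigma,y)=\langle C,\tilde\sigma\sigma^\top\rangle+\langle y,\tilde\sigma-\sigma\rangle+\frac\rho2\|\tilde\sigma-\sigma\|_F^2+\sum_{i=1}^n\mathcal{I}_{\{\|u\|=1\}}(\tilde\sigma_i)$,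 where $\mathcal{I}_S$ is the indicator function of $S$ (0 on $S$, $+\infty$ outside). A first-order stationary point is a $\tilde\sigma^*\in\mathcal{M}$ such that $-(C\tilde\sigma^* )_{i,\cdot}^\top\in\partial\mathcal{I}_{\{\|u\|=1\}}(\tilde\sigma^*_i)$ for all $i\in[n]$, where $\partial$ is the limiting subdifferential (for the unit sphere at a point $u$ this is $\{tu:t\in\mathbb{R}\}$). *)

theory Defs
  imports "HOL-Analysis.Analysis" "HOL-Library.Extended_Real"
begin

text \<open>Matrices in R^(n x r) are rendered as real^'r^'n: row i of sigma is sigma $ i :: real^'r.
  The Frobenius inner product <A,B> = Tr(A^T B) is the inner product on real^'r^'n.\<close>

definition frob :: "real^'b^'a \<Rightarrow> real^'b^'a \<Rightarrow> real" where
  "frob A B = (\<Sum>i\<in>UNIV. \<Sum>j\<in>UNIV. A $ i $ j * B $ i $ j)"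

definition spec_norm :: "real^'n^'n \<Rightarrow> real" where
  "spec_norm C = onorm (\<lambda>x. C *v x)"

definition inf_norm :: "real^'n^'n \<Rightarrow> real" where
  "inf_norm C = (MAX i. \<Sum>j\<in>UNIV. \<bar>C $ i $ j\<bar>)"

definition Mset :: "(real^'r^'n) set" where
  "Mset = {\<sigma>. \<forall>i. norm (\<sigma> $ i) = 1}"

definition indicator_ereal :: "'a set \<Rightarrow> 'a \<Rightarrow> ereal" where
  "indicator_ereal S x = (if x \<in> S then 0 else \<infinity>)"

definition sphere1 :: "(real^'r) set" where
  "sphere1 = {u. norm u = 1}"

definition frechet_subdiff :: "(real^'r \<Rightarrow> ereal) \<Rightarrow> real^'r \<Rightarrow> (real^'r) set" where
  "frechet_subdiff f x = {v. \<bar>f x\<bar> \<noteq> \<infinity> \<and>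
     Liminf (at x) (\<lambda>z. (f z - f x - ereal (v \<bullet> (z - x))) / ereal (norm (z - x))) \<ge> 0}"

definition limiting_subdiff :: "(real^'r \<Rightarrow> ereal) \<Rightarrow> real^'r \<Rightarrow> (real^'r) set" where
  "limiting_subdiff f x = {v. \<bar>f x\<bar> \<noteq> \<infinity> \<and> (\<exists>xs vs. xs \<longlonglongrightarrow> x \<and> (\<lambda>k. f (xs k)) \<longlonglongrightarrow> f x
      \<and> (\<forall>k. vs k \<in> frechet_subdiff f (xs k)) \<and> vs \<longlonglongrightarrow> v)}"

definition Lrho :: "real \<Rightarrow> real^'n^'n \<Rightarrow> real^'r^'n \<Rightarrow> real^'r^'n \<Rightarrow> real^'r^'n \<Rightarrow> ereal" where
  "Lrho \<rho> C ts s y = ereal (frob C (ts ** transpose s) + frob y (ts - s) + \<rho> / 2 * (norm (ts - s))\<^sup>2)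
     + (\<Sum>i\<in>UNIV. indicator_ereal sphere1 (ts $ i))"

definition Omega :: "real^'n^'n \<Rightarrow> (real^'r^'n) set" where
  "Omega C = {\<sigma>. \<sigma> \<in> Mset \<and>
     (\<forall>i. - ((C ** \<sigma>) $ i) \<in> limiting_subdiff (indicator_ereal sphere1) (\<sigma> $ i))}"

definition gam :: "real \<Rightarrow> real^'n^'n \<Rightarrow> real^'r^'n \<Rightarrow> real^'r^'n \<Rightarrow> real^'r^'n" where
  "gam \<rho> C s y = s - (1/\<rho>) *\<^sub>R (y + C ** s)"

definition is_admm_bm :: "real \<Rightarrow> real^'n^'n \<Rightarrow> (nat \<Rightarrow> real^'r^'n) \<Rightarrow> (nat \<Rightarrow> real^'r^'n)
    \<Rightarrow> (nat \<Rightarrow> real^'r^'n) \<Rightarrow> bool" where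
  "is_admm_bm \<rho> C ts s y \<longleftrightarrow>
     ts 0 \<in> Mset \<and> s 0 = ts 0 \<and> y 0 = C ** ts 0 \<and>
     (\<forall>k. (\<forall>i. ts (Suc k) $ i = (1 / norm (gam \<rho> C (s k) (y k) $ i)) *\<^sub>R (gam \<rho> C (s k) (y k) $ i))
        \<and> s (Suc k) = ts (Suc k) + (1/\<rho>) *\<^sub>R (y k - C ** ts (Suc k))
        \<and> y (Suc k) = y k + \<rho> *\<^sub>R (ts (Suc k) - s (Suc k)))"

end

theory Submission
  imports Defs
begin

text \<open>
  The multiplier update keeps \<open>y k = C ts k\<close>, so \<open>s (k+1) - ts (k+1) = (1/\<rho>) C (ts k - ts (k+1))\<close>
  is small, and \<open>\<rho> \<ge> 10 \<parallel>C\<parallel>\<^sub>\<infinity>\<close> keeps every row of \<open>\<gamma> k\<close> of length at least \<open>1/2\<close>.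
  Splitting one iteration into its three updates, the augmented Lagrangian changes by
  \<open>-\<rho> \<langle>\<Delta>, \<gamma> k\<rangle> - (\<rho>/2) \<parallel>s (k+1) - s k\<parallel>\<^sup>2 + \<parallel>C \<Delta>\<parallel>\<^sup>2/\<rho>\<close> with \<open>\<Delta> = ts (k+1) - ts k\<close>.
  Since \<open>ts (k+1)\<close> normalises the rows of \<open>\<gamma> k\<close>, \<open>\<langle>\<Delta>, \<gamma> k\<rangle> \<ge> \<parallel>\<Delta>\<parallel>\<^sup>2/4\<close>, so the Lagrangian
  decreases by at least \<open>(\<rho>/5) \<parallel>\<Delta>\<parallel>\<^sup>2\<close>. Being bounded below on \<open>Mset\<close>, it converges; hence
  \<open>\<Delta> \<longrightarrow> 0\<close> and \<open>s k - ts k \<longrightarrow> 0\<close>. At a cluster point \<open>l\<close>, passing to the limit in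
  \<open>\<parallel>(\<gamma> k)\<^sub>i\<parallel> (ts (k+1))\<^sub>i = (\<gamma> k)\<^sub>i\<close> shows that \<open>(C l)\<^sub>i\<close> is parallel to \<open>l\<^sub>i\<close>,
  which is stationarity on the product of spheres.
\<close>

lemma frob_eq_inner: "frob A B = inner A B"
  by (simp add: frob_def inner_vec_def)

lemma frob_matrix_mult_transpose: "frob C (X ** transpose S) = inner X (C ** S)"
proof -
  have "frob C (X ** transpose S) = (\<Sum>i\<in>UNIV. \<Sum>j\<in>UNIV. \<Sum>k\<in>UNIV. C$i$j * X$i$k * S$j$k)"
    by (simp add: frob_def matrix_matrix_mult_def transpose_def sum_distrib_left mult.assoc)
  also have "\<dots> = (\<Sum>i\<in>UNIV. \<Sum>k\<in>UNIV. \<Sum>j\<in>UNIV. C$i$j * X$i$k * S$j$k)"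
    by (rule sum.cong[OF refl], rule sum.swap)
  also have "\<dots> = inner X (C ** S)"
    by (simp add: inner_vec_def matrix_matrix_mult_def sum_distrib_left mult_ac)
  finally show ?thesis .
qed

lemma inner_matrix_mult_left:
  "inner ((A::real^'n^'m) ** X) (Y::real^'r^'m) = inner X (transpose A ** Y)"
proof -
  have "inner (A ** X) Y = (\<Sum>i\<in>UNIV. \<Sum>k\<in>UNIV. \<Sum>j\<in>UNIV. A$i$j * X$j$k * Y$i$k)"
    by (simp add: inner_vec_def matrix_matrix_mult_def sum_distrib_right)
  also have "\<dots> = (\<Sum>i\<in>UNIV. \<Sum>j\<in>UNIV. \<Sum>k\<in>UNIV. A$i$j * X$j$k * Y$i$k)"
    by (rule sum.cong[OF refl], rule sum.swap)
  also have "\<dots> = (\<Sum>j\<in>UNIV. \<Sum>i\<in>UNIV. \<Sum>k\<in>UNIV. A$i$j * X$j$k * Y$i$k)"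
    by (rule sum.swap)
  also have "\<dots> = (\<Sum>j\<in>UNIV. \<Sum>k\<in>UNIV. \<Sum>i\<in>UNIV. A$i$j * X$j$k * Y$i$k)"
    by (rule sum.cong[OF refl], rule sum.swap)
  also have "\<dots> = inner X (transpose A ** Y)"
    by (simp add: inner_vec_def matrix_matrix_mult_def transpose_def sum_distrib_left mult_ac)
  finally show ?thesis .
qed

lemma matrix_diff_ldistrib: "(C::real^'n^'m) ** (A - B) = C ** A - C ** B"
  by (simp add: matrix_matrix_mult_def vec_eq_iff sum_subtractf[symmetric] right_diff_distrib)

lemma matrix_scaleR_ldistrib: "(C::real^'n^'m) ** (c *\<^sub>R A) = c *\<^sub>R (C ** A)"
  by (simp add: matrix_matrix_mult_def vec_eq_iff sum_distrib_left mult_ac)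

lemma bounded_linear_matrix_mult_left: "bounded_linear (\<lambda>Z::real^'r^'n. (C::real^'n^'m) ** Z)"
  by (intro linear_conv_bounded_linear[THEN iffD1] linearI)
    (simp_all add: matrix_add_ldistrib matrix_scaleR_ldistrib)

lemma matrix_mult_row: "((C::real^'n^'m) ** Z) $ i = (\<Sum>j\<in>UNIV. C$i$j *\<^sub>R Z$j)"
  by (simp add: matrix_matrix_mult_def vec_eq_iff)

lemma norm_squared_rows: "(norm (x::real^'r^'n))\<^sup>2 = (\<Sum>i\<in>UNIV. (norm (x$i))\<^sup>2)"
  by (simp add: power2_norm_eq_inner inner_vec_def)

lemma row_sum_le_inf_norm: "(\<Sum>j\<in>UNIV. \<bar>C$i$j\<bar>) \<le> inf_norm C"
  unfolding inf_norm_def by (rule Max_ge) auto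

lemma inf_norm_nonneg: "0 \<le> inf_norm C"
  by (rule order_trans[OF _ row_sum_le_inf_norm]) (simp add: sum_nonneg)

lemma norm_matrix_mult_row_le:
  assumes "\<And>j. norm (Z$j) \<le> m"
  shows "norm (((C::real^'n^'n) ** (Z::real^'r^'n))$i) \<le> inf_norm C * m"
proof -
  have "norm ((C ** Z)$i) \<le> (\<Sum>j\<in>UNIV. \<bar>C$i$j\<bar> * m)"
    unfolding matrix_mult_row
    by (rule order_trans[OF norm_sum sum_mono]) (simp add: assms mult_left_mono)
  also have "\<dots> = (\<Sum>j\<in>UNIV. \<bar>C$i$j\<bar>) * m"
    by (simp add: sum_distrib_right)
  also have "\<dots> \<le> inf_norm C * m"
    using order_trans[OF norm_ge_zero assms] by (intro mult_right_mono row_sum_le_inf_norm)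
  finally show ?thesis .
qed

lemma weighted_Cauchy_Schwarz_sum:
  assumes "\<And>j. 0 \<le> (a j::real)"
  shows "(\<Sum>j\<in>A. a j * b j)\<^sup>2 \<le> (\<Sum>j\<in>A. a j) * (\<Sum>j\<in>A. a j * (b j)\<^sup>2)"
proof -
  have "(\<Sum>j\<in>A. sqrt (a j) * (sqrt (a j) * b j))\<^sup>2
      \<le> (\<Sum>j\<in>A. (sqrt (a j))\<^sup>2) * (\<Sum>j\<in>A. (sqrt (a j) * b j)\<^sup>2)"
    by (rule Cauchy_Schwarz_ineq_sum)
  then show ?thesis using assms by (simp add: power_mult_distrib mult.assoc[symmetric])
qed

text \<open>Schur test; symmetry turns the column sums into row sums.\<close>
lemma norm_matrix_mult_le_inf_norm:
  assumes "transpose C = C"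
  shows "norm ((C::real^'n^'n) ** Z) \<le> inf_norm C * norm (Z::real^'r^'n)"
proof -
  let ?K = "inf_norm C"
  have column_sum: "(\<Sum>i\<in>UNIV. \<bar>C$i$j\<bar>) = (\<Sum>i\<in>UNIV. \<bar>C$j$i\<bar>)" for j
    using assms by (metis transpose_def vec_lambda_beta)
  have row: "(norm ((C ** Z)$i))\<^sup>2 \<le> ?K * (\<Sum>j\<in>UNIV. \<bar>C$i$j\<bar> * (norm (Z$j))\<^sup>2)" for i
  proof -
    have "norm ((C ** Z)$i) \<le> (\<Sum>j\<in>UNIV. \<bar>C$i$j\<bar> * norm (Z$j))"
      unfolding matrix_mult_row by (rule order_trans[OF norm_sum]) simp
    then have "(norm ((C ** Z)$i))\<^sup>2 \<le> (\<Sum>j\<in>UNIV. \<bar>C$i$j\<bar> * norm (Z$j))\<^sup>2"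
      by (simp add: power_mono)
    also have "\<dots> \<le> (\<Sum>j\<in>UNIV. \<bar>C$i$j\<bar>) * (\<Sum>j\<in>UNIV. \<bar>C$i$j\<bar> * (norm (Z$j))\<^sup>2)"
      by (rule weighted_Cauchy_Schwarz_sum) simp
    also have "\<dots> \<le> ?K * (\<Sum>j\<in>UNIV. \<bar>C$i$j\<bar> * (norm (Z$j))\<^sup>2)"
      by (rule mult_right_mono[OF row_sum_le_inf_norm]) (simp add: sum_nonneg)
    finally show ?thesis .
  qed
  have "(norm (C ** Z))\<^sup>2 \<le> (\<Sum>i\<in>UNIV. ?K * (\<Sum>j\<in>UNIV. \<bar>C$i$j\<bar> * (norm (Z$j))\<^sup>2))"
    unfolding norm_squared_rows[of "C ** Z"] by (rule sum_mono[OF row])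
  also have "\<dots> = ?K * (\<Sum>j\<in>UNIV. (\<Sum>i\<in>UNIV. \<bar>C$i$j\<bar>) * (norm (Z$j))\<^sup>2)"
    by (simp add: sum_distrib_left sum_distrib_right) (rule sum.swap)
  also have "\<dots> = ?K * (\<Sum>j\<in>UNIV. (\<Sum>i\<in>UNIV. \<bar>C$j$i\<bar>) * (norm (Z$j))\<^sup>2)"
    by (simp only: column_sum)
  also have "\<dots> \<le> ?K * (\<Sum>j\<in>UNIV. ?K * (norm (Z$j))\<^sup>2)"
    by (intro mult_left_mono[OF sum_mono inf_norm_nonneg] mult_right_mono[OF row_sum_le_inf_norm]) simp
  also have "\<dots> = ?K * (?K * (norm Z)\<^sup>2)"
    by (simp add: norm_squared_rows sum_distrib_left)
  also have "\<dots> = (?K * norm Z)\<^sup>2"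
    by (simp add: power2_eq_square)
  finally show ?thesis
    by (rule power2_le_imp_le) (simp add: inf_norm_nonneg)
qed

lemma inner_unit_diff:
  fixes u z :: "'a::real_inner"
  assumes "norm u = 1" "norm z = 1"
  shows "inner u (z - u) = - (norm (z - u))\<^sup>2 / 2"
  using assms by (simp add: power2_norm_eq_inner inner_diff inner_commute norm_eq_1)

lemma inner_sgn_minus_unit:
  fixes u g :: "'a::real_inner"
  assumes "norm u = 1"
  shows "inner (sgn g - u) g = norm g * (norm (sgn g - u))\<^sup>2 / 2"
proof (cases "g = 0")
  case False
  have "(norm (sgn g - u))\<^sup>2 = 2 - 2 * inner u g / norm g"
  proof -
    have "inner (sgn g) u = inner u g / norm g"
      by (simp add: sgn_div_norm inner_commute divide_inverse_commute)
    moreover have "inner (sgn g) (sgn g) = 1" "inner u u = 1"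
      using False assms by (simp_all add: norm_eq_1[symmetric] norm_sgn)
    ultimately show ?thesis
      by (simp add: power2_norm_eq_inner inner_diff inner_commute[of u "sgn g"])
  qed
  moreover have "inner (sgn g) g = norm g"
    using False by (simp add: sgn_div_norm power2_norm_eq_inner[symmetric] power2_eq_square)
  ultimately show ?thesis
    using False by (simp add: inner_diff_left right_diff_distrib)
qed simp

lemma frechet_subdiff_sphere_indicator:
  fixes u :: "real^'r"
  assumes u: "norm u = 1"
  shows "t *\<^sub>R u \<in> frechet_subdiff (indicator_ereal sphere1) u"
proof -
  let ?f = "indicator_ereal sphere1 :: real^'r \<Rightarrow> ereal"
  let ?q = "\<lambda>z. (?f z - ?f u - ereal ((t *\<^sub>R u) \<bullet> (z - u))) / ereal (norm (z - u))"
  have fu: "?f u = 0" using u by (simp add: indicator_ereal_def sphere1_def)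
  have below: "\<forall>\<^sub>F z in at u. ereal (- \<bar>t\<bar> * norm (z - u) / 2) \<le> ?q z"
    unfolding eventually_at_filter
  proof (intro always_eventually allI impI)
    fix z :: "real^'r" assume "z \<noteq> u"
    then have r: "norm (z - u) > 0" by simp
    show "ereal (- \<bar>t\<bar> * norm (z - u) / 2) \<le> ?q z"
    proof (cases "norm z = 1")
      case True
      have "?q z = ereal (t * (norm (z - u))\<^sup>2 / 2 / norm (z - u))"
        using True fu inner_unit_diff[OF u True] by (simp add: indicator_ereal_def sphere1_def)
      also have "\<dots> = ereal (t * norm (z - u) / 2)"
        using r by (simp add: power2_eq_square)
      finally have "?q z = ereal (t * norm (z - u) / 2)" .
      moreover have "- \<bar>t\<bar> * norm (z - u) \<le> t * norm (z - u)"
        using r by (intro mult_right_mono) auto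
      ultimately show ?thesis by simp
    next
      case False
      then show ?thesis using r fu by (simp add: indicator_ereal_def sphere1_def)
    qed
  qed
  have "((\<lambda>z. - \<bar>t\<bar> * norm (z - u) / 2) \<longlongrightarrow> - \<bar>t\<bar> * norm (u - u) / 2) (at u)"
    by (intro tendsto_intros) simp
  then have "Liminf (at u) (\<lambda>z. ereal (- \<bar>t\<bar> * norm (z - u) / 2)) = 0"
    by (intro lim_imp_Liminf) (auto simp: zero_ereal_def dest: tendsto_ereal)
  then have "0 \<le> Liminf (at u) ?q"
    using Liminf_mono[OF below] by simp
  then show ?thesis unfolding frechet_subdiff_def using fu by simp
qed

lemma limiting_subdiff_sphere_indicator:
  fixes u :: "real^'r"
  assumes "norm u = 1"
  shows "t *\<^sub>R u \<in> limiting_subdiff (indicator_ereal sphere1) u"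
  unfolding limiting_subdiff_def
  using assms frechet_subdiff_sphere_indicator[OF assms]
  by (force simp: indicator_ereal_def sphere1_def)

lemma OmegaI:
  assumes "\<sigma> \<in> Mset" and "\<And>i. \<exists>t. - (C ** \<sigma>) $ i = t *\<^sub>R \<sigma> $ i"
  shows "\<sigma> \<in> Omega C"
  unfolding Omega_def
proof (intro CollectI conjI allI)
  fix i
  obtain t where "- (C ** \<sigma>) $ i = t *\<^sub>R \<sigma> $ i" using assms(2) by blast
  moreover have "norm (\<sigma> $ i) = 1" using assms(1) by (simp add: Mset_def)
  ultimately show "- (C ** \<sigma>) $ i \<in> limiting_subdiff (indicator_ereal sphere1) (\<sigma> $ i)"
    by (simp add: limiting_subdiff_sphere_indicator)
qed (rule assms(1))

lemma closed_Mset: "closed Mset"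
  unfolding Mset_def by (intro closed_Collect_all closed_Collect_eq continuous_intros)

lemma tendsto_zero_if_bounded_by_decrease:
  fixes F a :: "nat \<Rightarrow> real"
  assumes "F \<longlonglongrightarrow> L" and "\<And>k. 0 \<le> a k" and "\<And>k. F (Suc k) + a k \<le> F k"
  shows "a \<longlonglongrightarrow> 0"
proof (rule tendsto_sandwich[of "\<lambda>k. 0" _ _ "\<lambda>k. F k - F (Suc k)"])
  show "(\<lambda>k. F k - F (Suc k)) \<longlonglongrightarrow> 0"
    using tendsto_diff[OF assms(1) LIMSEQ_Suc[OF assms(1)]] by simp
qed (use assms(2,3) in \<open>auto simp: algebra_simps\<close>)

definition aug_lagrangian :: "('a::real_inner \<Rightarrow> 'a) \<Rightarrow> real \<Rightarrow> 'a \<Rightarrow> 'a \<Rightarrow> 'a \<Rightarrow> real" where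
  "aug_lagrangian f \<rho> x s y = inner x (f s) + inner y (x - s) + \<rho> / 2 * (norm (x - s))\<^sup>2"

lemma aug_lagrangian_step_eq:
  fixes f :: "'a::real_inner \<Rightarrow> 'a"
  assumes lin: "linear f" and selfadj: "\<And>u v. inner (f u) v = inner u (f v)" and "\<rho> > 0"
    and norm_x': "norm x' = norm x" and y: "y = f x" and y': "y' = f x'"
    and s': "s' = x' + (1/\<rho>) *\<^sub>R (y - f x')"
  shows "aug_lagrangian f \<rho> x' s' y' - aug_lagrangian f \<rho> x s y
       = - \<rho> * inner (x' - x) (s - (1/\<rho>) *\<^sub>R (y + f s)) - \<rho>/2 * (norm (s' - s))\<^sup>2
         + (norm (f (x' - x)))\<^sup>2 / \<rho>"
proof -
  have x_step: "aug_lagrangian f \<rho> x' s y - aug_lagrangian f \<rho> x s y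
      = - \<rho> * inner (x' - x) (s - (1/\<rho>) *\<^sub>R (y + f s))"
  proof -
    have "inner x' x' = inner x x"
      using norm_x' by (simp add: power2_norm_eq_inner[symmetric])
    then show ?thesis using \<open>\<rho> > 0\<close>
      by (simp add: aug_lagrangian_def power2_norm_eq_inner inner_simps algebra_simps inner_commute)
  qed
  have s_step: "aug_lagrangian f \<rho> x' s' y - aug_lagrangian f \<rho> x' s y = - \<rho>/2 * (norm (s' - s))\<^sup>2"
  proof -
    define d e where "d = s' - s" and "e = x' - s'"
    have "\<rho> * inner e d = - inner (y - f x') d"
      using s' \<open>\<rho> > 0\<close> by (simp add: e_def)
    moreover have "inner x' (f s') - inner x' (f s) = inner (f x') d"
      by (simp add: selfadj d_def linear_diff[OF lin] inner_diff_right)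
    moreover have "(norm (x' - s))\<^sup>2 = (norm e)\<^sup>2 + 2 * inner e d + (norm d)\<^sup>2"
      by (simp add: d_def e_def power2_norm_eq_inner inner_simps inner_commute)
    moreover have "inner y e = inner y x' - inner y s - inner y d"
      by (simp add: d_def e_def inner_diff_right)
    ultimately show ?thesis
      by (simp add: aug_lagrangian_def d_def[symmetric] e_def[symmetric] inner_diff algebra_simps)
  qed
  have y_step: "aug_lagrangian f \<rho> x' s' y' - aug_lagrangian f \<rho> x' s' y = (norm (f (x' - x)))\<^sup>2 / \<rho>"
  proof -
    have "x' - s' = (1/\<rho>) *\<^sub>R f (x' - x)"
      using s' y by (simp add: linear_diff[OF lin] scaleR_diff_right)
    moreover have "y' - y = f (x' - x)"
      unfolding y y' by (rule linear_diff[OF lin, symmetric])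
    ultimately have "inner (y' - y) (x' - s') = (norm (f (x' - x)))\<^sup>2 / \<rho>"
      by (simp add: power2_norm_eq_inner)
    then show ?thesis by (simp add: aug_lagrangian_def inner_diff_left)
  qed
  show ?thesis using x_step s_step y_step by simp
qed

locale admm_bm_run =
  fixes C :: "real^'n^'n" and \<rho> :: real and ts s y :: "nat \<Rightarrow> real^'r^'n"
  assumes symmetric: "transpose C = C"
    and rho_ge: "10 * inf_norm C \<le> \<rho>"
    and rho_pos: "\<rho> > 0"
    and iteration: "is_admm_bm \<rho> C ts s y"
    and gam_nonzero: "\<And>k i. gam \<rho> C (s k) (y k) $ i \<noteq> 0"
begin

abbreviation \<gamma> :: "nat \<Rightarrow> real^'r^'n" where
  "\<gamma> k \<equiv> gam \<rho> C (s k) (y k)"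

abbreviation lagr :: "nat \<Rightarrow> real" where
  "lagr k \<equiv> aug_lagrangian (\<lambda>Z. C ** Z) \<rho> (ts k) (s k) (y k)"

lemma ts_Suc_row: "ts (Suc k) $ i = sgn (\<gamma> k $ i)"
  using iteration by (simp add: is_admm_bm_def sgn_div_norm divide_inverse_commute)

lemma s_Suc: "s (Suc k) = ts (Suc k) + (1/\<rho>) *\<^sub>R (y k - C ** ts (Suc k))"
  using iteration by (simp add: is_admm_bm_def)

lemma y_eq: "y k = C ** ts k"
proof (cases k)
  case (Suc m)
  have "y (Suc m) = y m + \<rho> *\<^sub>R (ts (Suc m) - s (Suc m))"
    using iteration by (simp add: is_admm_bm_def)
  then show ?thesis using Suc rho_pos by (simp add: s_Suc scaleR_diff_right)
qed (use iteration in \<open>simp add: is_admm_bm_def\<close>)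

lemma s_Suc_eq: "s (Suc k) = ts (Suc k) + (1/\<rho>) *\<^sub>R (C ** (ts k - ts (Suc k)))"
  by (simp add: s_Suc y_eq matrix_diff_ldistrib)

lemma norm_ts_row [simp]: "norm (ts k $ i) = 1"
proof (cases k)
  case 0
  then show ?thesis using iteration by (simp add: is_admm_bm_def Mset_def)
qed (simp add: ts_Suc_row norm_sgn gam_nonzero)

lemma ts_in_Mset: "ts k \<in> Mset"
  by (simp add: Mset_def)

lemma norm_ts_squared: "(norm (ts k))\<^sup>2 = real CARD('n)"
  by (simp add: norm_squared_rows)

lemma norm_s_minus_ts_row: "norm ((s k - ts k) $ i) \<le> 2 * inf_norm C / \<rho>"
proof (cases k)
  case 0
  then show ?thesis using iteration rho_pos inf_norm_nonneg[of C] by (simp add: is_admm_bm_def)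
next
  case (Suc m)
  have "norm ((ts m - ts (Suc m)) $ j) \<le> 2" for j
    using norm_triangle_ineq4[of "ts m $ j" "ts (Suc m) $ j"] by simp
  then have "norm ((C ** (ts m - ts (Suc m))) $ i) \<le> inf_norm C * 2"
    by (rule norm_matrix_mult_row_le)
  then show ?thesis using Suc rho_pos by (simp add: s_Suc_eq divide_right_mono)
qed

lemma norm_gamma_row_ge: "1/2 \<le> norm (\<gamma> k $ i)"
proof -
  define q where "q = inf_norm C / \<rho>"
  have q: "0 \<le> q" "q \<le> 1/10"
    using inf_norm_nonneg rho_ge rho_pos by (simp_all add: q_def divide_simps)
  have s_row: "norm (s k $ j) \<le> 1 + 2 * q" for j
    using norm_triangle_ineq[of "ts k $ j" "(s k - ts k) $ j"] norm_s_minus_ts_row[of k j]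
    by (simp add: q_def)
  have Cts: "norm ((1/\<rho>) *\<^sub>R (C ** ts k) $ i) \<le> q"
    using norm_matrix_mult_row_le[of "ts k" 1 C i] rho_pos by (simp add: q_def divide_right_mono)
  have Cs: "norm ((1/\<rho>) *\<^sub>R (C ** s k) $ i) \<le> q * (1 + 2 * q)"
    using norm_matrix_mult_row_le[of "s k" "1 + 2 * q" C i, OF s_row] rho_pos
    by (simp add: q_def divide_right_mono)
  define a b c d where "a = ts k $ i" and "b = (s k - ts k) $ i"
    and "c = (1/\<rho>) *\<^sub>R (C ** ts k) $ i" and "d = (1/\<rho>) *\<^sub>R (C ** s k) $ i"
  have "\<gamma> k $ i = (a + b) - (c + d)"
    by (simp add: a_def b_def c_def d_def gam_def y_eq algebra_simps)
  then have "norm (a + b) - norm (c + d) \<le> norm (\<gamma> k $ i)"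
    by (simp add: norm_triangle_ineq2)
  moreover have "norm a = 1" "norm b \<le> 2 * q" "norm c \<le> q" "norm d \<le> q * (1 + 2 * q)"
    using norm_s_minus_ts_row[of k i] Cts Cs by (simp_all add: a_def b_def c_def d_def q_def)
  ultimately have "1 - 2 * q - (q + q * (1 + 2 * q)) \<le> norm (\<gamma> k $ i)"
    using norm_diff_ineq[of a b] norm_triangle_ineq[of c d] by linarith
  moreover have "1/2 \<le> 1 - 2 * q - (q + q * (1 + 2 * q))"
    using q mult_mono[OF q(2) q(2) _ q(1)] by (simp add: algebra_simps)
  ultimately show ?thesis by linarith
qed

lemma lagr_eq: "lagr k = inner (C ** ts k) (ts k) + \<rho>/2 * (norm (ts k - s k))\<^sup>2"
  by (simp add: aug_lagrangian_def y_eq inner_matrix_mult_left symmetric inner_diff_right)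

lemma Lrho_eq: "Lrho \<rho> C (ts k) (s k) (y k) = ereal (lagr k)"
proof -
  have "indicator_ereal sphere1 (ts k $ i) = 0" for i
    by (simp add: indicator_ereal_def sphere1_def)
  then show ?thesis
    unfolding Lrho_def frob_matrix_mult_transpose by (simp add: aug_lagrangian_def frob_eq_inner)
qed

lemma lagr_lower_bound: "- (inf_norm C * CARD('n)) \<le> lagr k"
proof -
  have "\<bar>inner (C ** ts k) (ts k)\<bar> \<le> norm (C ** ts k) * norm (ts k)"
    by (rule Cauchy_Schwarz_ineq2)
  also have "\<dots> \<le> inf_norm C * norm (ts k) * norm (ts k)"
    by (intro mult_right_mono norm_matrix_mult_le_inf_norm symmetric) simp
  also have "\<dots> = inf_norm C * CARD('n)"
    using norm_ts_squared[of k] by (simp add: power2_eq_square)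
  finally have "- (inf_norm C * CARD('n)) \<le> inner (C ** ts k) (ts k)"
    by (simp add: abs_le_iff)
  moreover have "0 \<le> \<rho>/2 * (norm (ts k - s k))\<^sup>2"
    using rho_pos by simp
  ultimately show ?thesis unfolding lagr_eq by linarith
qed

lemma inner_ts_step_gamma_ge: "(norm (ts (Suc k) - ts k))\<^sup>2 / 4 \<le> inner (ts (Suc k) - ts k) (\<gamma> k)"
proof -
  have "(norm ((ts (Suc k) - ts k) $ i))\<^sup>2 / 4 \<le> inner ((ts (Suc k) - ts k) $ i) (\<gamma> k $ i)" for i
  proof -
    have "1/2 * (norm ((ts (Suc k) - ts k) $ i))\<^sup>2
        \<le> norm (\<gamma> k $ i) * (norm ((ts (Suc k) - ts k) $ i))\<^sup>2"
      by (rule mult_right_mono[OF norm_gamma_row_ge zero_le_power2])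
    then have "(norm ((ts (Suc k) - ts k) $ i))\<^sup>2 / 4
        \<le> norm (\<gamma> k $ i) * (norm ((ts (Suc k) - ts k) $ i))\<^sup>2 / 2"
      by linarith
    also have "\<dots> = inner ((ts (Suc k) - ts k) $ i) (\<gamma> k $ i)"
      by (simp add: ts_Suc_row inner_sgn_minus_unit[symmetric])
    finally show ?thesis .
  qed
  then show ?thesis
    by (simp add: norm_squared_rows[of "ts (Suc k) - ts k"] inner_vec_def sum_divide_distrib sum_mono)
qed

lemma norm_matrix_mult_le_rho: "norm (C ** Z) \<le> \<rho> / 10 * norm Z"
proof -
  have "norm (C ** Z) \<le> inf_norm C * norm Z"
    by (rule norm_matrix_mult_le_inf_norm[OF symmetric])
  also have "\<dots> \<le> \<rho> / 10 * norm Z"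
    using rho_ge by (intro mult_right_mono) simp_all
  finally show ?thesis .
qed

lemma lagr_descent: "lagr (Suc k) + \<rho>/5 * (norm (ts (Suc k) - ts k))\<^sup>2 \<le> lagr k"
proof -
  let ?D = "ts (Suc k) - ts k"
  have "norm (ts (Suc k)) = norm (ts k)"
    using norm_ts_squared by (metis norm_ge_zero power2_eq_iff_nonneg)
  moreover have "linear (\<lambda>Z::real^'r^'n. C ** Z)"
    by (rule bounded_linear.linear[OF bounded_linear_matrix_mult_left])
  moreover have "\<And>U V. inner (C ** U) V = inner U (C ** V)"
    by (simp add: inner_matrix_mult_left symmetric)
  ultimately have "lagr (Suc k) - lagr k
      = - \<rho> * inner ?D (\<gamma> k) - \<rho>/2 * (norm (s (Suc k) - s k))\<^sup>2 + (norm (C ** ?D))\<^sup>2 / \<rho>"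
    unfolding gam_def using rho_pos y_eq s_Suc by (intro aug_lagrangian_step_eq)
  moreover have "(norm (C ** ?D))\<^sup>2 / \<rho> \<le> \<rho> / 100 * (norm ?D)\<^sup>2"
  proof -
    have "(norm (C ** ?D))\<^sup>2 \<le> (\<rho> / 10 * norm ?D)\<^sup>2"
      by (rule power_mono[OF norm_matrix_mult_le_rho norm_ge_zero])
    then have "(norm (C ** ?D))\<^sup>2 / \<rho> \<le> (\<rho> / 10 * norm ?D)\<^sup>2 / \<rho>"
      using rho_pos by (simp add: divide_right_mono)
    also have "\<dots> = \<rho> / 100 * (norm ?D)\<^sup>2"
      using rho_pos by (simp add: power2_eq_square)
    finally show ?thesis .
  qed
  moreover have "\<rho> * ((norm ?D)\<^sup>2 / 4) \<le> \<rho> * inner ?D (\<gamma> k)"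
    using inner_ts_step_gamma_ge rho_pos by (simp add: mult_left_mono)
  moreover have "0 \<le> \<rho>/2 * (norm (s (Suc k) - s k))\<^sup>2" "0 \<le> \<rho> * (norm ?D)\<^sup>2"
    using rho_pos by simp_all
  ultimately show ?thesis by (simp add: algebra_simps)
qed

lemma lagr_converges: "\<exists>L. lagr \<longlonglongrightarrow> L"
proof (rule decseq_convergent[of lagr "- (inf_norm C * CARD('n))"])
  show "decseq lagr"
  proof (rule decseq_SucI)
    fix k
    have "0 \<le> \<rho>/5 * (norm (ts (Suc k) - ts k))\<^sup>2"
      using rho_pos by simp
    then show "lagr (Suc k) \<le> lagr k"
      using lagr_descent[of k] by linarith
  qed
qed (use lagr_lower_bound in auto)

lemma ts_step_tendsto_zero: "(\<lambda>k. ts (Suc k) - ts k) \<longlonglongrightarrow> 0"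
proof -
  obtain L where "lagr \<longlonglongrightarrow> L" using lagr_converges by blast
  then have "(\<lambda>k. \<rho>/5 * (norm (ts (Suc k) - ts k))\<^sup>2) \<longlonglongrightarrow> 0"
    using lagr_descent rho_pos by (intro tendsto_zero_if_bounded_by_decrease) auto
  then have "(\<lambda>k. sqrt (5/\<rho> * (\<rho>/5 * (norm (ts (Suc k) - ts k))\<^sup>2))) \<longlonglongrightarrow> sqrt (5/\<rho> * 0)"
    by (intro tendsto_intros)
  then have "(\<lambda>k. norm (ts (Suc k) - ts k)) \<longlonglongrightarrow> 0"
    using rho_pos by simp
  then show ?thesis
    by (simp add: tendsto_norm_zero_iff)
qed

lemma s_minus_ts_tendsto_zero: "(\<lambda>k. s k - ts k) \<longlonglongrightarrow> 0"
proof (rule LIMSEQ_imp_Suc)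
  have "(\<lambda>k. ts k - ts (Suc k)) \<longlonglongrightarrow> 0"
    using tendsto_minus[OF ts_step_tendsto_zero] by simp
  then have "(\<lambda>k. C ** (ts k - ts (Suc k))) \<longlonglongrightarrow> 0"
    by (rule bounded_linear.tendsto_zero[OF bounded_linear_matrix_mult_left])
  then have "(\<lambda>k. (1/\<rho>) *\<^sub>R (C ** (ts k - ts (Suc k)))) \<longlonglongrightarrow> (1/\<rho>) *\<^sub>R 0"
    by (intro tendsto_intros)
  then show "(\<lambda>k. s (Suc k) - ts (Suc k)) \<longlonglongrightarrow> 0"
    by (simp add: s_Suc_eq)
qed

lemma Lrho_converges: "\<exists>l. (\<lambda>k. Lrho \<rho> C (ts (Suc k)) (s (Suc k)) (y (Suc k))) \<longlonglongrightarrow> ereal l"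
proof -
  obtain L where "lagr \<longlonglongrightarrow> L" using lagr_converges by blast
  then have "(\<lambda>k. ereal (lagr (Suc k))) \<longlonglongrightarrow> ereal L"
    by (intro tendsto_ereal LIMSEQ_Suc)
  then show ?thesis by (auto simp: Lrho_eq)
qed

lemma Lrho_minus_objective_tendsto_zero:
  "(\<lambda>k. Lrho \<rho> C (ts k) (s k) (y k) - ereal (frob (C ** ts k) (ts k))) \<longlonglongrightarrow> 0"
proof -
  have "(\<lambda>k. \<rho>/2 * (norm (s k - ts k))\<^sup>2) \<longlonglongrightarrow> \<rho>/2 * (norm (0::real^'r^'n))\<^sup>2"
    by (intro tendsto_intros s_minus_ts_tendsto_zero)
  then have "(\<lambda>k. ereal (\<rho>/2 * (norm (s k - ts k))\<^sup>2)) \<longlonglongrightarrow> ereal 0"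
    by (intro tendsto_ereal) simp
  then show ?thesis
    by (simp add: Lrho_eq lagr_eq frob_eq_inner norm_minus_commute zero_ereal_def)
qed

lemma ts_has_convergent_subsequence: "\<exists>\<phi> l. strict_mono \<phi> \<and> (ts \<circ> \<phi>) \<longlonglongrightarrow> l"
proof -
  have "bounded (range ts)"
    using norm_ts_squared real_sqrt_unique[of "norm (ts _)"] by (auto simp: bounded_iff)
  then show ?thesis using bounded_imp_convergent_subsequence by blast
qed

lemma limit_point_in_Omega:
  assumes "strict_mono \<phi>" and lim: "(ts \<circ> \<phi>) \<longlonglongrightarrow> l"
  shows "l \<in> Omega C"
proof (rule OmegaI)
  show "l \<in> Mset"
    using closed_sequentially[OF closed_Mset _ lim] ts_in_Mset by simp
  have ts_lim: "(\<lambda>k. ts (\<phi> k)) \<longlonglongrightarrow> l"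
    using lim by (simp add: o_def)
  have ts_Suc_lim: "(\<lambda>k. ts (Suc (\<phi> k))) \<longlonglongrightarrow> l"
    using tendsto_add[OF ts_lim LIMSEQ_subseq_LIMSEQ[OF ts_step_tendsto_zero assms(1)]]
    by (simp add: o_def)
  have s_lim: "(\<lambda>k. s (\<phi> k)) \<longlonglongrightarrow> l"
    using tendsto_add[OF ts_lim LIMSEQ_subseq_LIMSEQ[OF s_minus_ts_tendsto_zero assms(1)]]
    by (simp add: o_def)
  define g where "g = l - (1/\<rho>) *\<^sub>R (C ** l + C ** l)"
  have gamma_lim: "(\<lambda>k. \<gamma> (\<phi> k)) \<longlonglongrightarrow> g"
    unfolding gam_def y_eq g_def
    by (intro tendsto_intros s_lim ts_lim
        bounded_linear.tendsto[OF bounded_linear_matrix_mult_left])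
  fix i
  have "(\<lambda>k. norm (\<gamma> (\<phi> k) $ i) *\<^sub>R ts (Suc (\<phi> k)) $ i) \<longlonglongrightarrow> norm (g $ i) *\<^sub>R l $ i"
    by (intro tendsto_intros tendsto_vec_nth gamma_lim ts_Suc_lim)
  moreover have "norm (\<gamma> k $ i) *\<^sub>R ts (Suc k) $ i = \<gamma> k $ i" for k
    using gam_nonzero[of k i] by (simp add: ts_Suc_row sgn_div_norm)
  ultimately have "(\<lambda>k. \<gamma> (\<phi> k) $ i) \<longlonglongrightarrow> norm (g $ i) *\<^sub>R l $ i"
    by simp
  then have g_row: "g $ i = norm (g $ i) *\<^sub>R l $ i"
    by (rule LIMSEQ_unique[OF tendsto_vec_nth[OF gamma_lim]])
  have "(\<rho>/2 * (norm (g $ i) - 1)) *\<^sub>R l $ i = (\<rho>/2) *\<^sub>R (g $ i - l $ i)"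
    by (subst (2) g_row) (simp add: algebra_simps)
  also have "\<dots> = - (C ** l) $ i"
    using rho_pos by (simp add: g_def scaleR_half_double)
  finally have "- (C ** l) $ i = (\<rho>/2 * (norm (g $ i) - 1)) *\<^sub>R l $ i" ..
  then show "\<exists>t. - (C ** l) $ i = t *\<^sub>R l $ i" ..
qed

end

theorem theorem1:
  fixes C :: "real^'n^'n" and \<rho> :: real
    and ts s y :: "nat \<Rightarrow> real^'r^'n"
  assumes symC: "transpose C = C"
    and rho: "\<rho> \<ge> max (10 * inf_norm C) (2 * spec_norm C)"
    and rho_pos: "\<rho> > 0"
    and alg: "is_admm_bm \<rho> C ts s y"
    and assmA: "\<forall>k i. gam \<rho> C (s k) (y k) $ i \<noteq> 0"
  shows "(\<exists>l::real. (\<lambda>k. Lrho \<rho> C (ts (Suc k)) (s (Suc k)) (y (Suc k))) \<longlonglongrightarrow> ereal l)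
    \<and> (\<lambda>k. Lrho \<rho> C (ts k) (s k) (y k) - ereal (frob (C ** ts k) (ts k))) \<longlonglongrightarrow> 0
    \<and> (\<exists>\<phi> l. strict_mono \<phi> \<and> (ts \<circ> \<phi>) \<longlonglongrightarrow> l)
    \<and> (\<forall>\<phi> l. strict_mono \<phi> \<and> (ts \<circ> \<phi>) \<longlonglongrightarrow> l \<longrightarrow> l \<in> Omega C)"
proof -
  interpret admm_bm_run C \<rho> ts s y
    using assms by unfold_locales auto
  show ?thesis
    using Lrho_converges Lrho_minus_objective_tendsto_zero ts_has_convergent_subsequence
      limit_point_in_Omega by blast
qed

end
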